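(* Fix $\kappa>0$ and $x_0\in\mathbb R^2$. Let $m\in\mathbb Z\setminus\{0\}$, $\Phi(\alpha):=-m\,\vec\alpha\cdot x_0$, $I=[a,b]\subset[-\pi,\pi]$, $l\in\mathbb Z$, and $g\in C^1(I)$. Suppose (1) $\Phi''(\alpha)\ne0$ for $\alpha\in(a,b)$; (2) there is $\alpha_0\in I$ with $\kappa\Phi'(\alpha_0)=l$ and $\Phi''(\alpha_0)\neq0$; (3) $|\kappa\Phi'(\alpha)-l|\le1/2$ for all $\alpha\in I$. Then for every $\epsilon>0$, $$\Bigl|\int_I g(\alpha)h_l(\alpha)\,e\Bigl(\frac{\Phi_l(\alpha)}{\epsilon}\Bigr)d\alpha\Bigr|\le c\,\epsilon^{1/2}\Bigl[\max_{I}|g|+\int_I|g'(\alpha)|\,d\alpha\Bigr]\,|\Phi''(\alpha_0)|^{-1/2},$$ where $c$ depends only on $\kappa$ and $x_0$ (it is independent of $g$, $m$, $\epsilon$, $l$ and $I$).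
   Context: $\vec\alpha=(\cos\alpha,\sin\alpha)$, $e(r):=\exp(2\pi ir)$. For the given $\Phi$ and $l$: $\Phi_l(\alpha):=\Phi(\alpha)-(l/\kappa)\alpha$, and $h_l(\alpha):=\dfrac{\pi\kappa\Phi_l'(\alpha)}{\sin(\pi\kappa\Phi_l'(\alpha))}$ if $\Phi_l'(\alpha)\neq0$, $h_l(\alpha):=1$ if $\Phi_l'(\alpha)=0$ (note $\kappa\Phi_l'=\kappa\Phi'-l\in[-1/2,1/2]$ on $I$). *)

theory Defs
  imports "HOL-Analysis.Analysis"
begin

definition dirvec :: "real \<Rightarrow> real^2" where
  "dirvec \<alpha> = vector [cos \<alpha>, sin \<alpha>]"

definition e :: "real \<Rightarrow> complex" where
  "e r = exp (2 * of_real pi * \<i> * of_real r)"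

definition Phi :: "int \<Rightarrow> real^2 \<Rightarrow> real \<Rightarrow> real" where
  "Phi m x0 \<alpha> = - real_of_int m * (dirvec \<alpha> \<bullet> x0)"

definition Phi_l :: "real \<Rightarrow> int \<Rightarrow> real^2 \<Rightarrow> int \<Rightarrow> real \<Rightarrow> real" where
  "Phi_l \<kappa> m x0 l \<alpha> = Phi m x0 \<alpha> - (real_of_int l / \<kappa>) * \<alpha>"

definition h_l :: "real \<Rightarrow> int \<Rightarrow> real^2 \<Rightarrow> int \<Rightarrow> real \<Rightarrow> real" where
  "h_l \<kappa> m x0 l \<alpha> =
     (let d = deriv (Phi_l \<kappa> m x0 l) \<alpha> in
      if d \<noteq> 0 then (pi * \<kappa> * d) / sin (pi * \<kappa> * d) else 1)"

end

theory Submission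
  imports Defs
begin

text \<open>
  Put \<open>P = \<kappa>\<Phi>' - l\<close>. The derivative \<open>\<Phi>'(t) = m (x0\<^sub>1 sin t - x0\<^sub>2 cos t)\<close> is a sinusoid, and as
  \<open>\<Phi>''\<close> keeps one sign on \<open>I\<close>, the addition formulas and Jordan's inequality give
  \<open>|P(t)| \<ge> \<kappa> |\<Phi>''(\<alpha>0)| |t - \<alpha>0| / \<pi>\<close>. Cut \<open>I\<close> at distance \<open>\<delta> = sqrt (\<epsilon> / |\<Phi>''(\<alpha>0)|)\<close>
  from \<open>\<alpha>0\<close>. Near \<open>\<alpha>0\<close> one uses \<open>|h\<^sub>l| \<le> \<pi>/2\<close> (Jordan again). Away from \<open>\<alpha>0\<close> the amplitude
  \<open>h\<^sub>l = \<pi>P / sin (\<pi>P)\<close> contains the derivative \<open>P/\<kappa>\<close> of the phase \<open>\<Phi>\<^sub>l\<close>, so one integration by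
  parts moves the derivative onto \<open>g / sin (\<pi>P)\<close>; the factor \<open>1 / sin (\<pi>P)\<close> is monotone and of size
  at most \<open>\<pi> / (2 \<kappa> |\<Phi>''(\<alpha>0)| \<delta>)\<close>. Each of the three pieces is then at most
  \<open>\<pi> (max |g| + \<integral>|g'|) \<delta>\<close>, so \<open>c = 3\<pi>\<close> works, independently even of \<open>\<kappa>\<close> and \<open>x0\<close>.
\<close>

lemma jordan_inequality:
  assumes "\<bar>x\<bar> \<le> pi / 2"
  shows "2 * \<bar>x\<bar> / pi \<le> \<bar>sin x\<bar>"
proof -
  have concave: "concave_on {0..pi/2} sin"
    by (rule f''_le0_imp_concave[where f'=cos and f''="\<lambda>x. - sin x"])
       (auto intro!: derivative_eq_intros sin_ge_zero)
  have "2 * y / pi \<le> sin y" if "0 \<le> y" "y \<le> pi / 2" for y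
    using concave_onD[OF concave, of "2 * y / pi" 0 "pi / 2"] that by (auto simp: field_simps)
  from this[of "\<bar>x\<bar>"] assms show ?thesis
    by (cases "x \<ge> 0") auto
qed

lemma abs_pi_mult_div_sin_le:
  assumes "\<bar>x\<bar> \<le> 1/2" "x \<noteq> 0"
  shows "\<bar>pi * x / sin (pi * x)\<bar> \<le> pi / 2"
proof -
  have "2 * \<bar>x\<bar> \<le> \<bar>sin (pi * x)\<bar>"
    using jordan_inequality[of "pi * x"] assms(1) by (simp add: abs_mult)
  then have "pi * \<bar>x\<bar> / \<bar>sin (pi * x)\<bar> \<le> pi * \<bar>x\<bar> / (2 * \<bar>x\<bar>)"
    using assms(2) by (intro divide_left_mono) auto
  then show ?thesis
    using assms(2) by (simp add: abs_mult abs_divide)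
qed

lemma sqrt_divide_eq_powr:
  assumes "0 < y"
  shows "sqrt (x / y) = sqrt x * y powr (-1/2)"
proof -
  have "y powr (-1/2) = inverse (y powr (1/2))"
    using powr_minus[of y "1/2"] by simp
  also have "\<dots> = inverse (sqrt y)"
    using assms by (simp only: powr_half_sqrt less_imp_le)
  finally show ?thesis
    by (simp only: divide_inverse real_sqrt_mult real_sqrt_inverse)
qed

lemma norm_le_SUP_norm:
  fixes g :: "real \<Rightarrow> 'a::real_normed_vector"
  assumes "continuous_on {a..b} g" "t \<in> {a..b}"
  shows "norm (g t) \<le> (SUP s\<in>{a..b}. norm (g s))"
proof -
  have "bdd_above ((\<lambda>s. norm (g s)) ` {a..b})"
    using assms(1)
    by (intro bounded_imp_bdd_above compact_imp_bounded compact_continuous_image continuous_intros) auto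
  then show ?thesis using cSUP_upper[OF assms(2)] by blast
qed

lemma continuous_on_nonzero_interior_sign:
  fixes f :: "real \<Rightarrow> real"
  assumes cont: "continuous_on {a..b} f" and nz: "\<forall>t\<in>{a<..<b}. f t \<noteq> 0"
  shows "(\<forall>t\<in>{a..b}. 0 \<le> f t) \<or> (\<forall>t\<in>{a..b}. f t \<le> 0)"
proof (rule ccontr)
  assume "\<not> ?thesis"
  then obtain s t where st: "s \<in> {a..b}" "t \<in> {a..b}" "f s < 0" "0 < f t"
    by (auto simp: not_le)
  have "\<exists>z. min s t \<le> z \<and> z \<le> max s t \<and> f z = 0"
  proof (cases "s \<le> t")
    case True
    then show ?thesis
      using IVT'[of f s 0 t] st continuous_on_subset[OF cont] by auto
  next
    case False
    then show ?thesis
      using IVT2'[of f s 0 t] st continuous_on_subset[OF cont] by auto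
  qed
  then obtain z where "min s t \<le> z" "z \<le> max s t" "f z = 0" by blast
  moreover have "z \<noteq> s" "z \<noteq> t" using st \<open>f z = 0\<close> by auto
  ultimately have "z \<in> {a<..<b}" using st by auto
  with nz \<open>f z = 0\<close> show False by blast
qed

lemma has_integral_abs_derivative:
  fixes f f' :: "real \<Rightarrow> real"
  assumes "c \<le> d" and f: "\<And>t. t \<in> {c..d} \<Longrightarrow> (f has_real_derivative f' t) (at t within {c..d})"
    and sign: "(\<forall>t\<in>{c..d}. 0 \<le> f' t) \<or> (\<forall>t\<in>{c..d}. f' t \<le> 0)"
  shows "((\<lambda>t. \<bar>f' t\<bar>) has_integral \<bar>f d - f c\<bar>) {c..d}"
proof -
  have ftc: "(f' has_integral f d - f c) {c..d}"
    using assms(1) f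
    by (intro fundamental_theorem_of_calculus) (auto simp: has_real_derivative_iff_has_vector_derivative)
  from sign show ?thesis
  proof
    assume pos: "\<forall>t\<in>{c..d}. 0 \<le> f' t"
    have "0 \<le> f d - f c" using has_integral_nonneg[OF ftc] pos by auto
    then show ?thesis
      using has_integral_eq[OF _ ftc, of "\<lambda>t. \<bar>f' t\<bar>"] pos by auto
  next
    assume neg: "\<forall>t\<in>{c..d}. f' t \<le> 0"
    have "0 \<le> - (f d - f c)" using has_integral_nonneg[OF has_integral_neg[OF ftc]] neg by auto
    then show ?thesis
      using has_integral_eq[OF _ has_integral_neg[OF ftc], of "\<lambda>t. \<bar>f' t\<bar>"] neg by auto
  qed
qed

lemma norm_integral_by_parts_le:
  fixes E E' u u' :: "real \<Rightarrow> complex"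
  assumes "c \<le> d"
    and E: "\<And>t. (E has_vector_derivative E' t) (at t)" "\<And>t. norm (E t) = 1"
    and u: "\<And>t. t \<in> {c..d} \<Longrightarrow> (u has_vector_derivative u' t) (at t within {c..d})"
    and u'_cont: "continuous_on {c..d} u'"
  obtains y where "((\<lambda>t. E' t * u t) has_integral y) {c..d}"
    "norm y \<le> norm (u c) + norm (u d) + integral {c..d} (\<lambda>t. norm (u' t))"
proof -
  have E_cont: "continuous_on {c..d} E"
    using E(1) by (meson has_vector_derivative_continuous continuous_at_imp_continuous_on)
  have u_cont: "continuous_on {c..d} u"
    using u by (rule continuous_on_vector_derivative)
  have Eu'_int: "(\<lambda>t. E t * u' t) integrable_on {c..d}"
    using E_cont u'_cont by (intro integrable_continuous_real continuous_intros)
  define J where "J = integral {c..d} (\<lambda>t. E t * u' t)"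
  define y where "y = E d * u d - E c * u c - J"
  have "((\<lambda>t. E' t * u t) has_integral y) {c..d}"
  proof (rule integration_by_parts_interior[OF bounded_bilinear_mult \<open>c \<le> d\<close> E_cont u_cont E(1)])
    fix t assume "t \<in> {c<..<d}"
    then show "(u has_vector_derivative u' t) (at t)"
      using u[of t] at_within_interior[of t "{c..d}"] by auto
  next
    show "((\<lambda>t. E t * u' t) has_integral E d * u d - E c * u c - y) {c..d}"
      using integrable_integral[OF Eu'_int] by (simp add: y_def J_def)
  qed
  moreover have "norm J \<le> integral {c..d} (\<lambda>t. norm (u' t))"
    unfolding J_def
    by (rule integral_norm_bound_integral[OF Eu'_int])
       (auto simp: norm_mult E(2) intro: integrable_continuous_real continuous_intros u'_cont)
  then have "norm y \<le> norm (u c) + norm (u d) + integral {c..d} (\<lambda>t. norm (u' t))"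
    unfolding y_def using norm_triangle_ineq4[of "E d * u d - E c * u c" J]
      norm_triangle_ineq4[of "E d * u d" "E c * u c"] by (simp add: norm_mult E(2))
  ultimately show ?thesis using that by blast
qed

lemma real_mult_has_vector_derivative_bounds:
  fixes g g' :: "real \<Rightarrow> complex" and s s' :: "real \<Rightarrow> real"
  assumes "c \<le> d"
    and s: "\<And>t. t \<in> {c..d} \<Longrightarrow> (s has_real_derivative s' t) (at t)" "continuous_on {c..d} s'"
      "\<And>t. t \<in> {c..d} \<Longrightarrow> \<bar>s t\<bar> \<le> K"
    and g: "\<And>t. t \<in> {c..d} \<Longrightarrow> (g has_vector_derivative g' t) (at t within {c..d})"
      "continuous_on {c..d} g'" "\<And>t. t \<in> {c..d} \<Longrightarrow> norm (g t) \<le> M"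
  shows "\<And>t. t \<in> {c..d} \<Longrightarrow> ((\<lambda>t. complex_of_real (s t) * g t) has_vector_derivative
            complex_of_real (s t) * g' t + complex_of_real (s' t) * g t) (at t within {c..d})"
    and "continuous_on {c..d} (\<lambda>t. complex_of_real (s t) * g' t + complex_of_real (s' t) * g t)"
    and "integral {c..d} (\<lambda>t. norm (complex_of_real (s t) * g' t + complex_of_real (s' t) * g t))
           \<le> K * integral {c..d} (\<lambda>t. norm (g' t)) + M * integral {c..d} (\<lambda>t. \<bar>s' t\<bar>)"
proof -
  show "((\<lambda>t. complex_of_real (s t) * g t) has_vector_derivative
          complex_of_real (s t) * g' t + complex_of_real (s' t) * g t) (at t within {c..d})"
    if "t \<in> {c..d}" for t
    using has_vector_derivative_mult[OF has_vector_derivative_of_real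
            [OF has_field_derivative_at_within[OF s(1)[OF that]]] g(1)[OF that]] by simp
  have s_cont: "continuous_on {c..d} s"
    using s(1) by (meson DERIV_continuous continuous_at_imp_continuous_on)
  have g_cont: "continuous_on {c..d} g"
    using g(1) by (rule continuous_on_vector_derivative)
  show u'_cont: "continuous_on {c..d} (\<lambda>t. complex_of_real (s t) * g' t + complex_of_real (s' t) * g t)"
    using s_cont s(2) g_cont g(2) by (intro continuous_intros)
  have "c \<in> {c..d}" using \<open>c \<le> d\<close> by simp
  then have M_nonneg: "0 \<le> M" using g(3) norm_ge_zero order.trans by blast
  have majorant: "((\<lambda>t. K * norm (g' t) + M * \<bar>s' t\<bar>) has_integral
      K * integral {c..d} (\<lambda>t. norm (g' t)) + M * integral {c..d} (\<lambda>t. \<bar>s' t\<bar>)) {c..d}"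
    using g(2) s(2)
    by (intro has_integral_add has_integral_mult_right integrable_integral integrable_continuous_real
        continuous_intros)
  show "integral {c..d} (\<lambda>t. norm (complex_of_real (s t) * g' t + complex_of_real (s' t) * g t))
          \<le> K * integral {c..d} (\<lambda>t. norm (g' t)) + M * integral {c..d} (\<lambda>t. \<bar>s' t\<bar>)"
  proof (rule has_integral_le[OF _ majorant])
    show "((\<lambda>t. norm (complex_of_real (s t) * g' t + complex_of_real (s' t) * g t)) has_integral
            integral {c..d} (\<lambda>t. norm (complex_of_real (s t) * g' t + complex_of_real (s' t) * g t))) {c..d}"
      by (intro integrable_integral integrable_continuous_real continuous_on_norm u'_cont)
    fix t assume t: "t \<in> {c..d}"
    have "norm (complex_of_real (s t) * g' t + complex_of_real (s' t) * g t)
          \<le> \<bar>s t\<bar> * norm (g' t) + \<bar>s' t\<bar> * norm (g t)"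
      by (rule order.trans[OF norm_triangle_ineq]) (simp add: norm_mult)
    also have "\<dots> \<le> K * norm (g' t) + \<bar>s' t\<bar> * M"
      using s(3)[OF t] g(3)[OF t] by (intro add_mono mult_mono) auto
    finally show "norm (complex_of_real (s t) * g' t + complex_of_real (s' t) * g t)
                  \<le> K * norm (g' t) + M * \<bar>s' t\<bar>" by (simp add: mult_ac)
  qed
qed

lemma norm_integral_split_around_le:
  fixes f :: "real \<Rightarrow> 'a::banach"
  assumes "\<alpha>0 \<in> {a..b}" "0 \<le> \<delta>" "0 \<le> A" "0 \<le> B"
    and far: "\<And>c d. c \<le> d \<Longrightarrow> {c..d} \<subseteq> {a..b} \<Longrightarrow> \<forall>t\<in>{c..d}. \<delta> \<le> \<bar>t - \<alpha>0\<bar> \<Longrightarrow>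
                norm (integral {c..d} f) \<le> A"
    and near: "\<And>c d. c \<le> d \<Longrightarrow> {c..d} \<subseteq> {a..b} \<Longrightarrow> d - c \<le> 2 * \<delta> \<Longrightarrow>
                norm (integral {c..d} f) \<le> B"
  shows "norm (integral {a..b} f) \<le> 2 * A + B"
proof (cases "f integrable_on {a..b}")
  case False
  then show ?thesis using assms(3,4) by (simp add: not_integrable_integral)
next
  case True
  define p where "p = max a (\<alpha>0 - \<delta>)"
  define q where "q = min b (\<alpha>0 + \<delta>)"
  have pq: "a \<le> p" "p \<le> q" "q \<le> b" "q - p \<le> 2 * \<delta>"
    using assms(1,2) by (auto simp: p_def q_def)
  have "f integrable_on {a..q}"
    by (rule integrable_subinterval_real[OF True]) (use pq in auto)
  then have "integral {a..p} f + integral {p..q} f = integral {a..q} f"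
    by (rule Henstock_Kurzweil_Integration.integral_combine[OF pq(1,2)])
  moreover have "integral {a..q} f + integral {q..b} f = integral {a..b} f"
    by (rule Henstock_Kurzweil_Integration.integral_combine[OF _ pq(3) True]) (use pq in linarith)
  ultimately have split: "integral {a..b} f = integral {a..p} f + integral {p..q} f + integral {q..b} f"
    by simp
  have left: "norm (integral {a..p} f) \<le> A"
  proof (cases "a < p")
    case True
    then have "p = \<alpha>0 - \<delta>" by (simp add: p_def)
    then show ?thesis using pq by (intro far) auto
  next
    case False
    then show ?thesis using pq assms(3) by simp
  qed
  have right: "norm (integral {q..b} f) \<le> A"
  proof (cases "q < b")
    case True
    then have "q = \<alpha>0 + \<delta>" by (simp add: q_def)
    then show ?thesis using pq by (intro far) auto
  next
    case False
    then show ?thesis using pq assms(3) by simp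
  qed
  have mid: "norm (integral {p..q} f) \<le> B"
    using pq by (intro near) auto
  have "norm (integral {a..b} f)
        \<le> norm (integral {a..p} f) + norm (integral {p..q} f) + norm (integral {q..b} f)"
    unfolding split by (rule order.trans[OF norm_triangle_ineq add_right_mono[OF norm_triangle_ineq]])
  then show ?thesis using left mid right by linarith
qed

section \<open>Oscillatory integrals without stationary point\<close>

lemma norm_e [simp]: "norm (e r) = 1"
  by (simp add: e_def norm_exp_eq_Re)

lemma e_has_vector_derivative:
  assumes "(F has_real_derivative F') (at t)"
  shows "((\<lambda>t. e (F t)) has_vector_derivative e (F t) * (2 * pi * \<i> * F')) (at t)"
proof -
  have "((\<lambda>t. 2 * complex_of_real pi * \<i> * complex_of_real (F t)) has_vector_derivative
          2 * complex_of_real pi * \<i> * complex_of_real F') (at t)"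
    by (intro has_vector_derivative_mult_right has_vector_derivative_of_real assms)
  from field_vector_diff_chain_at[OF this DERIV_exp] show ?thesis
    unfolding e_def o_def by (simp add: mult_ac)
qed

lemma inverse_sin_pi_bounds:
  fixes P P' :: "real \<Rightarrow> real"
  assumes "c \<le> d" "L > 0"
    and P: "\<And>t. (P has_real_derivative P' t) (at t)" "continuous_on {c..d} P'"
    and P'_sign: "(\<forall>t\<in>{c..d}. 0 \<le> P' t) \<or> (\<forall>t\<in>{c..d}. P' t \<le> 0)"
    and P_bounds: "\<And>t. t \<in> {c..d} \<Longrightarrow> L \<le> \<bar>P t\<bar> \<and> \<bar>P t\<bar> \<le> 1/2"
  obtains R where
    "\<And>t. t \<in> {c..d} \<Longrightarrow> \<bar>inverse (sin (pi * P t))\<bar> \<le> 1 / (2 * L)"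
    "\<And>t. t \<in> {c..d} \<Longrightarrow> ((\<lambda>t. inverse (sin (pi * P t))) has_real_derivative R t) (at t)"
    "continuous_on {c..d} R" "integral {c..d} (\<lambda>t. \<bar>R t\<bar>) \<le> 1 / L"
proof -
  define S where "S t = sin (pi * P t)" for t
  have S_lower: "2 * L \<le> \<bar>S t\<bar>" if "t \<in> {c..d}" for t
    using jordan_inequality[of "pi * P t"] P_bounds[OF that] by (simp add: S_def abs_mult)
  then have S_nz: "S t \<noteq> 0" if "t \<in> {c..d}" for t
    using that \<open>L > 0\<close> by fastforce
  have inverse_S_bound: "\<bar>inverse (S t)\<bar> \<le> 1 / (2 * L)" if "t \<in> {c..d}" for t
    using S_lower[OF that] \<open>L > 0\<close> by (simp add: abs_inverse divide_simps)
  have cos_nonneg: "0 \<le> cos (pi * P t)" if "t \<in> {c..d}" for t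
  proof -
    have "\<bar>pi * P t\<bar> \<le> pi / 2" using P_bounds[OF that] by (simp add: abs_mult)
    then show ?thesis using cos_ge_zero[of "pi * P t"] by linarith
  qed
  define R where "R t = - (cos (pi * P t) * (pi * P' t)) / (S t)\<^sup>2" for t
  have S_deriv: "(S has_real_derivative cos (pi * P t) * (pi * P' t)) (at t)" for t
    unfolding S_def[abs_def] by (auto intro!: derivative_eq_intros P)
  have R_deriv: "((\<lambda>t. inverse (S t)) has_real_derivative R t) (at t)" if "t \<in> {c..d}" for t
    using DERIV_inverse_fun[OF S_deriv S_nz[OF that]]
    by (simp add: R_def power2_eq_square divide_inverse)
  have S_cont: "continuous_on {c..d} S"
    using S_deriv by (meson DERIV_continuous continuous_at_imp_continuous_on)
  have P_cont: "continuous_on {c..d} P"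
    using P(1) by (meson DERIV_continuous continuous_at_imp_continuous_on)
  have R_cont: "continuous_on {c..d} R"
    unfolding R_def[abs_def] using S_cont P_cont P(2) S_nz by (intro continuous_intros) auto
  have "(\<forall>t\<in>{c..d}. 0 \<le> R t) \<or> (\<forall>t\<in>{c..d}. R t \<le> 0)"
    using P'_sign cos_nonneg
    by (auto simp: R_def intro!: divide_nonpos_nonneg mult_nonneg_nonpos mult_nonneg_nonneg
                   simp del: mult_minus_left)
  then have R_int: "((\<lambda>t. \<bar>R t\<bar>) has_integral \<bar>inverse (S d) - inverse (S c)\<bar>) {c..d}"
    using \<open>c \<le> d\<close> R_deriv by (intro has_integral_abs_derivative) (auto intro: has_field_derivative_at_within)
  have "\<bar>inverse (S d) - inverse (S c)\<bar> \<le> \<bar>inverse (S d)\<bar> + \<bar>inverse (S c)\<bar>"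
    by (rule abs_triangle_ineq4)
  also have "\<dots> \<le> 1 / (2 * L) + 1 / (2 * L)"
    using inverse_S_bound[of c] inverse_S_bound[of d] \<open>c \<le> d\<close> by (intro add_mono) auto
  finally have "integral {c..d} (\<lambda>t. \<bar>R t\<bar>) \<le> 1 / L"
    using integral_unique[OF R_int] by simp
  with that inverse_S_bound R_deriv R_cont show ?thesis
    unfolding S_def by blast
qed

lemma oscillatory_integral_bound:
  fixes g g' :: "real \<Rightarrow> complex" and P P' F :: "real \<Rightarrow> real"
  assumes "c \<le> d" "\<kappa> > 0" "\<epsilon> > 0" "L > 0"
    and P: "\<And>t. (P has_real_derivative P' t) (at t)" "continuous_on {c..d} P'"
      "(\<forall>t\<in>{c..d}. 0 \<le> P' t) \<or> (\<forall>t\<in>{c..d}. P' t \<le> 0)"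
      "\<And>t. t \<in> {c..d} \<Longrightarrow> L \<le> \<bar>P t\<bar> \<and> \<bar>P t\<bar> \<le> 1/2"
    and F: "\<And>t. (F has_real_derivative P t / \<kappa>) (at t)"
    and g: "\<And>t. t \<in> {c..d} \<Longrightarrow> (g has_vector_derivative g' t) (at t within {c..d})"
      "continuous_on {c..d} g'" "\<And>t. t \<in> {c..d} \<Longrightarrow> norm (g t) \<le> M"
  obtains I where
    "((\<lambda>t. g t * complex_of_real (pi * P t / sin (pi * P t)) * e (F t / \<epsilon>)) has_integral I) {c..d}"
    "norm I \<le> \<kappa> * \<epsilon> * (M + integral {c..d} (\<lambda>t. norm (g' t))) / L"
proof -
  define s where "s t = inverse (sin (pi * P t))" for t
  obtain R where s: "\<And>t. t \<in> {c..d} \<Longrightarrow> \<bar>s t\<bar> \<le> 1 / (2 * L)"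
      "\<And>t. t \<in> {c..d} \<Longrightarrow> (s has_real_derivative R t) (at t)" "continuous_on {c..d} R"
    and R_total: "integral {c..d} (\<lambda>t. \<bar>R t\<bar>) \<le> 1 / L"
    using inverse_sin_pi_bounds[OF \<open>c \<le> d\<close> \<open>L > 0\<close> P] unfolding s_def[symmetric] by blast
  define u where "u t = complex_of_real (s t) * g t" for t
  define u' where "u' t = complex_of_real (s t) * g' t + complex_of_real (R t) * g t" for t
  define V where "V = integral {c..d} (\<lambda>t. norm (g' t))"
  note u = real_mult_has_vector_derivative_bounds[OF \<open>c \<le> d\<close> s(2,3,1) g, folded u_def u'_def V_def]
  define E where "E t = e (F t / \<epsilon>)" for t
  define E' where "E' t = E t * (2 * pi * \<i> * (P t / \<kappa> / \<epsilon>))" for t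
  have E_deriv: "(E has_vector_derivative E' t) (at t)" for t
    unfolding E_def[abs_def] E'_def by (intro e_has_vector_derivative DERIV_cdivide F)
  obtain y where y: "((\<lambda>t. E' t * u t) has_integral y) {c..d}"
    "norm y \<le> norm (u c) + norm (u d) + integral {c..d} (\<lambda>t. norm (u' t))"
    using norm_integral_by_parts_le[OF \<open>c \<le> d\<close> E_deriv _ u(1,2)] by (auto simp: E_def)
  \<comment> \<open>The factor \<open>P\<close> of the amplitude \<open>\<pi>P / sin (\<pi>P)\<close> is exactly the derivative of the phase.\<close>
  define w where "w = complex_of_real (\<kappa> * \<epsilon>) / (2 * \<i>)"
  have "g t * complex_of_real (pi * P t / sin (pi * P t)) * e (F t / \<epsilon>) = w * (E' t * u t)" for t
    using \<open>\<kappa> > 0\<close> \<open>\<epsilon> > 0\<close> by (simp add: w_def E'_def u_def E_def s_def field_simps)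
  then have "((\<lambda>t. g t * complex_of_real (pi * P t / sin (pi * P t)) * e (F t / \<epsilon>)) has_integral w * y) {c..d}"
    using has_integral_mult_right[OF y(1)] by simp
  moreover have "norm (w * y) \<le> \<kappa> * \<epsilon> * (M + V) / L"
  proof -
    have "c \<in> {c..d}" using \<open>c \<le> d\<close> by simp
    then have M_nonneg: "0 \<le> M" using g(3) norm_ge_zero order.trans by blast
    have V_nonneg: "0 \<le> V"
      unfolding V_def using g(2) by (intro integral_nonneg integrable_continuous_real continuous_intros) auto
    have u_bound: "norm (u t) \<le> M / (2 * L)" if "t \<in> {c..d}" for t
    proof -
      have "norm (u t) = \<bar>s t\<bar> * norm (g t)" by (simp add: u_def norm_mult)
      also have "\<dots> \<le> 1 / (2 * L) * M"
        using s(1)[OF that] g(3)[OF that] \<open>L > 0\<close> by (intro mult_mono) auto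
      finally show ?thesis by simp
    qed
    have "integral {c..d} (\<lambda>t. norm (u' t)) \<le> V / (2 * L) + M / L"
      using u(3) mult_left_mono[OF R_total M_nonneg] by simp
    then have "norm y \<le> M / L + V / (2 * L) + M / L"
      using y(2) u_bound[of c] u_bound[of d] \<open>c \<le> d\<close> by (simp add: field_simps)
    then have "norm (w * y) \<le> \<kappa> * \<epsilon> / 2 * (M / L + V / (2 * L) + M / L)"
      using \<open>\<kappa> > 0\<close> \<open>\<epsilon> > 0\<close> by (simp add: w_def norm_mult norm_divide)
    also have "\<dots> \<le> \<kappa> * \<epsilon> * (M + V) / L"
      using \<open>\<kappa> > 0\<close> \<open>\<epsilon> > 0\<close> \<open>L > 0\<close> M_nonneg V_nonneg by (simp add: field_simps)
    finally show ?thesis .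
  qed
  ultimately show ?thesis using that unfolding V_def by blast
qed

section \<open>Derivatives of the phase\<close>

definition dPhi :: "int \<Rightarrow> real^2 \<Rightarrow> real \<Rightarrow> real" where
  "dPhi m x0 t = real_of_int m * (sin t * x0$1 - cos t * x0$2)"

definition d2Phi :: "int \<Rightarrow> real^2 \<Rightarrow> real \<Rightarrow> real" where
  "d2Phi m x0 t = real_of_int m * (cos t * x0$1 + sin t * x0$2)"

lemma Phi_eq: "Phi m x0 t = - real_of_int m * (cos t * x0$1 + sin t * x0$2)"
  by (simp add: Phi_def dirvec_def inner_vec_def sum_2)

lemma Phi_has_real_derivative: "(Phi m x0 has_real_derivative dPhi m x0 t) (at t)"
  unfolding Phi_eq[abs_def] dPhi_def by (auto intro!: derivative_eq_intros simp: algebra_simps)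

lemma dPhi_has_real_derivative: "(dPhi m x0 has_real_derivative d2Phi m x0 t) (at t)"
  unfolding dPhi_def[abs_def] d2Phi_def by (auto intro!: derivative_eq_intros simp: algebra_simps)

lemma deriv_Phi: "deriv (Phi m x0) = dPhi m x0"
  using Phi_has_real_derivative DERIV_imp_deriv by blast

lemma deriv_dPhi: "deriv (dPhi m x0) = d2Phi m x0"
  using dPhi_has_real_derivative DERIV_imp_deriv by blast

lemma Phi_l_has_real_derivative:
  "(Phi_l \<kappa> m x0 l has_real_derivative dPhi m x0 t - real_of_int l / \<kappa>) (at t)"
  unfolding Phi_l_def[abs_def]
  using DERIV_diff[OF Phi_has_real_derivative DERIV_cmult_Id[of "real_of_int l / \<kappa>"]] by simp

lemma deriv_Phi_l: "deriv (Phi_l \<kappa> m x0 l) t = dPhi m x0 t - real_of_int l / \<kappa>"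
  using Phi_l_has_real_derivative DERIV_imp_deriv by blast

lemma continuous_on_d2Phi: "continuous_on S (d2Phi m x0)"
  unfolding d2Phi_def[abs_def] by (intro continuous_intros)

lemma dPhi_add_minus_dPhi_diff: "dPhi m x0 (s + d) - dPhi m x0 (s - d) = 2 * sin d * d2Phi m x0 s"
  by (simp add: dPhi_def d2Phi_def sin_add sin_diff cos_add cos_diff algebra_simps)

lemma d2Phi_add_plus_d2Phi_diff: "d2Phi m x0 (s + d) + d2Phi m x0 (s - d) = 2 * cos d * d2Phi m x0 s"
  by (simp add: d2Phi_def sin_add sin_diff cos_add cos_diff algebra_simps)

text \<open>Write \<open>t, \<alpha>0 = s \<plusminus> r\<close>. Then \<open>\<Phi>'(t) - \<Phi>'(\<alpha>0) = 2 sin r \<Phi>''(s)\<close> and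
  \<open>\<Phi>''(t) + \<Phi>''(\<alpha>0) = 2 cos r \<Phi>''(s)\<close>; as \<open>\<Phi>''\<close> has one sign, the second identity forces
  \<open>cos r > 0\<close>, hence \<open>|r| \<le> \<pi>/2\<close>, and \<open>|\<Phi>''(s)| \<ge> |\<Phi>''(\<alpha>0)|/2\<close>. Jordan's inequality finishes.\<close>
lemma dPhi_diff_lower_bound:
  assumes sign: "(\<forall>t\<in>{a..b}. 0 \<le> d2Phi m x0 t) \<or> (\<forall>t\<in>{a..b}. d2Phi m x0 t \<le> 0)"
    and "b - a \<le> 2 * pi" "t \<in> {a..b}" "\<alpha>0 \<in> {a..b}"
  shows "\<bar>d2Phi m x0 \<alpha>0\<bar> * \<bar>t - \<alpha>0\<bar> / pi \<le> \<bar>dPhi m x0 t - dPhi m x0 \<alpha>0\<bar>"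
proof -
  define \<sigma> :: real where "\<sigma> = (if \<forall>t\<in>{a..b}. 0 \<le> d2Phi m x0 t then 1 else -1)"
  have \<sigma>: "\<bar>\<sigma>\<bar> = 1" "\<And>t. t \<in> {a..b} \<Longrightarrow> 0 \<le> \<sigma> * d2Phi m x0 t"
    using sign by (auto simp: \<sigma>_def)
  define s where "s = (t + \<alpha>0) / 2"
  define r where "r = (t - \<alpha>0) / 2"
  have ts: "t = s + r" "\<alpha>0 = s - r" by (simp_all add: s_def r_def field_simps)
  have "s \<in> {a..b}" using assms(3,4) by (auto simp: s_def)
  then have s_nonneg: "0 \<le> \<sigma> * d2Phi m x0 s" by (rule \<sigma>(2))
  have Q: "\<bar>d2Phi m x0 \<alpha>0\<bar> = \<sigma> * d2Phi m x0 \<alpha>0"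
    using \<sigma>(1) abs_of_nonneg[OF \<sigma>(2)[OF assms(4)]] by (simp add: abs_mult)
  have sum: "\<sigma> * d2Phi m x0 t + \<sigma> * d2Phi m x0 \<alpha>0 = 2 * cos r * (\<sigma> * d2Phi m x0 s)"
    using arg_cong[OF d2Phi_add_plus_d2Phi_diff[of m x0 s r], of "(*) \<sigma>"]
    unfolding ts[symmetric] by (simp add: algebra_simps)
  show ?thesis
  proof (cases "d2Phi m x0 \<alpha>0 = 0")
    case False
    then have "0 < cos r * (\<sigma> * d2Phi m x0 s)"
      using sum \<sigma>(2)[OF assms(3)] Q by linarith
    then have cos_pos: "0 < cos r"
      using s_nonneg by (simp add: zero_less_mult_iff)
    have "cos r * (\<sigma> * d2Phi m x0 s) \<le> \<sigma> * d2Phi m x0 s"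
      using mult_right_mono[OF cos_le_one s_nonneg] by simp
    then have half: "\<bar>d2Phi m x0 \<alpha>0\<bar> \<le> 2 * (\<sigma> * d2Phi m x0 s)"
      using sum \<sigma>(2)[OF assms(3)] Q by linarith
    have "\<bar>r\<bar> \<le> pi" using assms by (auto simp: r_def)
    then have "\<bar>r\<bar> \<le> pi / 2"
      using cos_pos cos_lt_zero_pi[of "\<bar>r\<bar>"] by (cases "pi / 2 < \<bar>r\<bar>") auto
    then have jordan: "2 * \<bar>r\<bar> / pi \<le> \<bar>sin r\<bar>" by (rule jordan_inequality)
    have "\<bar>dPhi m x0 t - dPhi m x0 \<alpha>0\<bar> = 2 * \<bar>sin r\<bar> * \<bar>\<sigma> * d2Phi m x0 s\<bar>"
      using dPhi_add_minus_dPhi_diff[of m x0 s r] \<sigma>(1) unfolding ts[symmetric] by (simp add: abs_mult)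
    also have "\<dots> \<ge> 2 * (2 * \<bar>r\<bar> / pi) * (\<bar>d2Phi m x0 \<alpha>0\<bar> / 2)"
      using jordan half s_nonneg by (intro mult_mono) auto
    finally show ?thesis by (simp add: r_def field_simps abs_divide)
  qed simp
qed

lemma h_l_eq:
  assumes "\<kappa> > 0"
  shows "h_l \<kappa> m x0 l t = (let P = \<kappa> * dPhi m x0 t - l in if P \<noteq> 0 then pi * P / sin (pi * P) else 1)"
proof -
  have "pi * \<kappa> * (dPhi m x0 t - l / \<kappa>) = pi * (\<kappa> * dPhi m x0 t - l)"
    "dPhi m x0 t - l / \<kappa> \<noteq> 0 \<longleftrightarrow> \<kappa> * dPhi m x0 t - l \<noteq> 0"
    using assms by (auto simp: field_simps)
  then show ?thesis
    unfolding h_l_def deriv_Phi_l Let_def by presburger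
qed

lemma abs_h_l_le:
  assumes "\<kappa> > 0" "\<bar>\<kappa> * dPhi m x0 t - l\<bar> \<le> 1/2"
  shows "\<bar>h_l \<kappa> m x0 l t\<bar> \<le> pi / 2"
  using abs_pi_mult_div_sin_le[OF assms(2)] pi_gt3 unfolding h_l_eq[OF assms(1)] Let_def by auto

section \<open>The stationary phase estimate\<close>

locale stationary_phase =
  fixes \<kappa> :: real and m :: int and x0 :: "real^2" and l :: int and a b \<alpha>0 :: real
  assumes kappa_pos: "\<kappa> > 0"
    and interval: "-pi \<le> a" "a \<le> b" "b \<le> pi"
    and d2Phi_nonzero: "\<forall>\<alpha>\<in>{a<..<b}. d2Phi m x0 \<alpha> \<noteq> 0"
    and stationary: "\<alpha>0 \<in> {a..b}" "\<kappa> * dPhi m x0 \<alpha>0 = l" "d2Phi m x0 \<alpha>0 \<noteq> 0"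
    and phase_bound: "\<forall>\<alpha>\<in>{a..b}. \<bar>\<kappa> * dPhi m x0 \<alpha> - l\<bar> \<le> 1/2"
begin

abbreviation integrand :: "(real \<Rightarrow> complex) \<Rightarrow> real \<Rightarrow> real \<Rightarrow> complex" where
  "integrand g \<epsilon> \<equiv> \<lambda>\<alpha>. g \<alpha> * complex_of_real (h_l \<kappa> m x0 l \<alpha>) * e (Phi_l \<kappa> m x0 l \<alpha> / \<epsilon>)"

lemma d2Phi_sign: "(\<forall>t\<in>{a..b}. 0 \<le> d2Phi m x0 t) \<or> (\<forall>t\<in>{a..b}. d2Phi m x0 t \<le> 0)"
  using continuous_on_nonzero_interior_sign[OF continuous_on_d2Phi d2Phi_nonzero] .

lemma phase_lower_bound:
  assumes "t \<in> {a..b}" "\<delta> \<le> \<bar>t - \<alpha>0\<bar>"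
  shows "\<kappa> * \<bar>d2Phi m x0 \<alpha>0\<bar> * \<delta> / pi \<le> \<bar>\<kappa> * dPhi m x0 t - l\<bar>"
proof -
  have "\<bar>d2Phi m x0 \<alpha>0\<bar> * \<delta> / pi \<le> \<bar>d2Phi m x0 \<alpha>0\<bar> * \<bar>t - \<alpha>0\<bar> / pi"
    using assms(2) by (intro divide_right_mono mult_left_mono) auto
  also have "\<dots> \<le> \<bar>dPhi m x0 t - dPhi m x0 \<alpha>0\<bar>"
    using dPhi_diff_lower_bound[OF d2Phi_sign _ assms(1) stationary(1)] interval by auto
  finally have "\<kappa> * (\<bar>d2Phi m x0 \<alpha>0\<bar> * \<delta> / pi) \<le> \<kappa> * \<bar>dPhi m x0 t - dPhi m x0 \<alpha>0\<bar>"
    using kappa_pos by (intro mult_left_mono) auto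
  also have "\<dots> = \<bar>\<kappa> * dPhi m x0 t - l\<bar>"
    using kappa_pos stationary(2)[symmetric] by (simp add: abs_mult right_diff_distrib[symmetric])
  finally show ?thesis by simp
qed

lemma far_integral_bound:
  fixes g g' :: "real \<Rightarrow> complex"
  assumes g: "\<forall>t\<in>{a..b}. (g has_vector_derivative g' t) (at t within {a..b})"
      "continuous_on {a..b} g'" "\<And>t. t \<in> {a..b} \<Longrightarrow> norm (g t) \<le> M"
    and "\<epsilon> > 0" "\<delta> > 0" "c \<le> d" and cd: "{c..d} \<subseteq> {a..b}" and away: "\<forall>t\<in>{c..d}. \<delta> \<le> \<bar>t - \<alpha>0\<bar>"
  shows "norm (integral {c..d} (integrand g \<epsilon>))
         \<le> pi * \<epsilon> * (M + integral {a..b} (\<lambda>t. norm (g' t))) / (\<bar>d2Phi m x0 \<alpha>0\<bar> * \<delta>)"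
proof -
  define P where "P t = \<kappa> * dPhi m x0 t - l" for t
  define L where "L = \<kappa> * \<bar>d2Phi m x0 \<alpha>0\<bar> * \<delta> / pi"
  have L_pos: "L > 0"
    using kappa_pos stationary(3) \<open>\<delta> > 0\<close> by (simp add: L_def)
  have P_bounds: "L \<le> \<bar>P t\<bar> \<and> \<bar>P t\<bar> \<le> 1/2" if "t \<in> {c..d}" for t
    using phase_lower_bound phase_bound away that cd unfolding L_def P_def by auto
  have P_deriv: "(P has_real_derivative \<kappa> * d2Phi m x0 t) (at t)" for t
    unfolding P_def[abs_def] by (auto intro!: derivative_eq_intros dPhi_has_real_derivative)
  have P'_sign: "(\<forall>t\<in>{c..d}. 0 \<le> \<kappa> * d2Phi m x0 t) \<or> (\<forall>t\<in>{c..d}. \<kappa> * d2Phi m x0 t \<le> 0)"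
    using d2Phi_sign cd kappa_pos by (auto simp: mult_nonneg_nonpos zero_le_mult_iff)
  have Phi_l_deriv: "(Phi_l \<kappa> m x0 l has_real_derivative P t / \<kappa>) (at t)" for t
    using Phi_l_has_real_derivative[of \<kappa> m x0 l t] kappa_pos by (simp add: P_def diff_divide_distrib)
  have P'_cont: "continuous_on {c..d} (\<lambda>t. \<kappa> * d2Phi m x0 t)"
    by (intro continuous_intros continuous_on_d2Phi)
  have g_cd: "(g has_vector_derivative g' t) (at t within {c..d})" "norm (g t) \<le> M"
    if "t \<in> {c..d}" for t
    using has_vector_derivative_within_subset[OF bspec[OF g(1)] cd] g(3) that cd by auto
  obtain I where I: "((\<lambda>t. g t * complex_of_real (pi * P t / sin (pi * P t)) * e (Phi_l \<kappa> m x0 l t / \<epsilon>))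
                        has_integral I) {c..d}"
      "norm I \<le> \<kappa> * \<epsilon> * (M + integral {c..d} (\<lambda>t. norm (g' t))) / L"
    by (rule oscillatory_integral_bound[OF \<open>c \<le> d\<close> kappa_pos \<open>\<epsilon> > 0\<close> L_pos P_deriv
          P'_cont P'_sign P_bounds Phi_l_deriv
          g_cd(1) continuous_on_subset[OF g(2) cd] g_cd(2)])
  have "integral {c..d} (integrand g \<epsilon>) = I"
  proof (rule integral_unique, rule has_integral_eq[OF _ I(1)])
    fix t assume "t \<in> {c..d}"
    then have "P t \<noteq> 0" using P_bounds L_pos by fastforce
    then show "g t * complex_of_real (pi * P t / sin (pi * P t)) * e (Phi_l \<kappa> m x0 l t / \<epsilon>) =
               integrand g \<epsilon> t"
      unfolding h_l_eq[OF kappa_pos] P_def Let_def by simp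
  qed
  moreover have "integral {c..d} (\<lambda>t. norm (g' t)) \<le> integral {a..b} (\<lambda>t. norm (g' t))"
    using cd g(2)
    by (intro integral_subset_le integrable_continuous_real continuous_intros)
       (auto intro: continuous_on_subset)
  ultimately have "norm (integral {c..d} (integrand g \<epsilon>))
                   \<le> \<kappa> * \<epsilon> * (M + integral {a..b} (\<lambda>t. norm (g' t))) / L"
    using I(2) kappa_pos \<open>\<epsilon> > 0\<close> L_pos
    by (smt (verit) divide_right_mono mult_left_mono mult_pos_pos)
  also have "\<dots> = pi * \<epsilon> * (M + integral {a..b} (\<lambda>t. norm (g' t))) / (\<bar>d2Phi m x0 \<alpha>0\<bar> * \<delta>)"
    unfolding L_def using kappa_pos stationary(3) \<open>\<delta> > 0\<close> by (simp add: field_simps)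
  finally show ?thesis .
qed

lemma near_integral_bound:
  fixes g :: "real \<Rightarrow> complex"
  assumes g: "\<And>t. t \<in> {a..b} \<Longrightarrow> norm (g t) \<le> M" and "c \<le> d" "{c..d} \<subseteq> {a..b}"
  shows "norm (integral {c..d} (integrand g \<epsilon>)) \<le> pi / 2 * M * (d - c)"
proof -
  have "c \<in> {a..b}" using assms(2,3) by auto
  then have M_nonneg: "0 \<le> M" using g[of c] norm_ge_zero[of "g c"] by linarith
  have bound: "norm (integrand g \<epsilon> t) \<le> pi / 2 * M" if "t \<in> {c..d}" for t
  proof -
    have t: "t \<in> {a..b}" using that assms(3) by auto
    have "norm (integrand g \<epsilon> t) = \<bar>h_l \<kappa> m x0 l t\<bar> * norm (g t)"
      by (simp add: norm_mult)
    also have "\<dots> \<le> pi / 2 * M"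
      using g[OF t] abs_h_l_le[OF kappa_pos] phase_bound t by (intro mult_mono) auto
    finally show ?thesis .
  qed
  show ?thesis
  proof (cases "integrand g \<epsilon> integrable_on {c..d}")
    case True
    have "norm (integral {c..d} (integrand g \<epsilon>))
          \<le> pi / 2 * M * Henstock_Kurzweil_Integration.content {c..d}"
      by (rule has_integral_bound_real[OF _ _ integrable_integral[OF True]]) (use bound M_nonneg in auto)
    then show ?thesis using \<open>c \<le> d\<close> by simp
  next
    case False
    then show ?thesis using M_nonneg \<open>c \<le> d\<close> by (simp add: not_integrable_integral)
  qed
qed

lemma integral_bound:
  fixes g g' :: "real \<Rightarrow> complex"
  assumes g: "\<forall>t\<in>{a..b}. (g has_vector_derivative g' t) (at t within {a..b})" "continuous_on {a..b} g'"
    and "\<epsilon> > 0"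
  shows "norm (integral {a..b} (integrand g \<epsilon>))
         \<le> 3 * pi * sqrt \<epsilon> * ((SUP \<alpha>\<in>{a..b}. norm (g \<alpha>)) + integral {a..b} (\<lambda>\<alpha>. norm (g' \<alpha>)))
           * \<bar>d2Phi m x0 \<alpha>0\<bar> powr (-1/2)"
proof -
  define M where "M = (SUP \<alpha>\<in>{a..b}. norm (g \<alpha>))"
  define V where "V = integral {a..b} (\<lambda>\<alpha>. norm (g' \<alpha>))"
  define Q where "Q = \<bar>d2Phi m x0 \<alpha>0\<bar>"
  \<comment> \<open>\<open>\<delta>\<close> balances the near part, of size \<open>M \<delta>\<close>, against the far part, of size \<open>\<epsilon> / (Q \<delta>)\<close>.\<close>
  define \<delta> where "\<delta> = sqrt (\<epsilon> / Q)"
  have Q_pos: "Q > 0" using stationary(3) by (simp add: Q_def)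
  have \<delta>_pos: "\<delta> > 0" using \<open>\<epsilon> > 0\<close> Q_pos by (simp add: \<delta>_def)
  have "\<delta> * \<delta> = \<epsilon> / Q" using \<open>\<epsilon> > 0\<close> Q_pos by (simp add: \<delta>_def)
  then have \<delta>_eq: "\<epsilon> / (Q * \<delta>) = \<delta>" using \<delta>_pos Q_pos by (simp add: field_simps)
  have "continuous_on {a..b} g" using g(1) by (intro continuous_on_vector_derivative) auto
  then have gM: "norm (g t) \<le> M" if "t \<in> {a..b}" for t
    unfolding M_def using norm_le_SUP_norm that by blast
  have "a \<in> {a..b}" using interval(2) by simp
  from gM[OF this] have M_nonneg: "0 \<le> M" by (rule order.trans[OF norm_ge_zero])
  have V_nonneg: "0 \<le> V"
    unfolding V_def using g(2) by (intro integral_nonneg integrable_continuous_real continuous_intros) auto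
  have "norm (integral {a..b} (integrand g \<epsilon>)) \<le> 2 * (pi * (M + V) * \<delta>) + pi * M * \<delta>"
  proof (rule norm_integral_split_around_le[OF stationary(1) less_imp_le[OF \<delta>_pos]])
    show "0 \<le> pi * (M + V) * \<delta>" "0 \<le> pi * M * \<delta>"
      using M_nonneg V_nonneg \<delta>_pos by simp_all
  next
    fix c d assume "c \<le> d" "{c..d} \<subseteq> {a..b}" "\<forall>t\<in>{c..d}. \<delta> \<le> \<bar>t - \<alpha>0\<bar>"
    from far_integral_bound[OF g gM \<open>\<epsilon> > 0\<close> \<delta>_pos this]
    have "norm (integral {c..d} (integrand g \<epsilon>)) \<le> pi * (M + V) * (\<epsilon> / (Q * \<delta>))"
      unfolding V_def Q_def by (simp add: mult_ac)
    then show "norm (integral {c..d} (integrand g \<epsilon>)) \<le> pi * (M + V) * \<delta>"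
      unfolding \<delta>_eq .
  next
    fix c d assume "c \<le> d" "{c..d} \<subseteq> {a..b}" "d - c \<le> 2 * \<delta>"
    have "norm (integral {c..d} (integrand g \<epsilon>)) \<le> pi / 2 * M * (d - c)"
      by (rule near_integral_bound[where g=g and M=M, OF gM \<open>c \<le> d\<close> \<open>{c..d} \<subseteq> {a..b}\<close>])
    also have "\<dots> \<le> pi / 2 * M * (2 * \<delta>)"
      using M_nonneg \<open>d - c \<le> 2 * \<delta>\<close> by (intro mult_left_mono) auto
    finally show "norm (integral {c..d} (integrand g \<epsilon>)) \<le> pi * M * \<delta>"
      by simp
  qed
  also have "\<dots> \<le> 3 * pi * (M + V) * \<delta>"
    using V_nonneg \<delta>_pos by (simp add: algebra_simps)
  also have "\<delta> = sqrt \<epsilon> * Q powr (-1/2)"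
    unfolding \<delta>_def using Q_pos by (rule sqrt_divide_eq_powr)
  finally show ?thesis
    unfolding M_def V_def Q_def by (simp only: mult_ac)
qed

end

theorem mainTheorem10:
  fixes \<kappa> :: real and x0 :: "real^2"
  assumes "\<kappa> > 0"
  shows "\<exists>c::real. \<forall>(m::int) (a::real) (b::real) (l::int) (g::real \<Rightarrow> complex)
            (g'::real \<Rightarrow> complex) (\<alpha>0::real) (\<epsilon>::real).
     m \<noteq> 0 \<longrightarrow> -pi \<le> a \<longrightarrow> a \<le> b \<longrightarrow> b \<le> pi \<longrightarrow>
     (\<forall>t\<in>{a..b}. (g has_vector_derivative g' t) (at t within {a..b})) \<longrightarrow>
     continuous_on {a..b} g' \<longrightarrow>
     (\<forall>\<alpha>\<in>{a<..<b}. deriv (deriv (Phi m x0)) \<alpha> \<noteq> 0) \<longrightarrow>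
     \<alpha>0 \<in> {a..b} \<longrightarrow> \<kappa> * deriv (Phi m x0) \<alpha>0 = real_of_int l \<longrightarrow>
     deriv (deriv (Phi m x0)) \<alpha>0 \<noteq> 0 \<longrightarrow>
     (\<forall>\<alpha>\<in>{a..b}. \<bar>\<kappa> * deriv (Phi m x0) \<alpha> - real_of_int l\<bar> \<le> 1/2) \<longrightarrow>
     \<epsilon> > 0 \<longrightarrow>
     norm (integral {a..b} (\<lambda>\<alpha>. g \<alpha> * complex_of_real (h_l \<kappa> m x0 l \<alpha>)
                                   * e (Phi_l \<kappa> m x0 l \<alpha> / \<epsilon>)))
       \<le> c * sqrt \<epsilon> * ((SUP \<alpha>\<in>{a..b}. norm (g \<alpha>)) + integral {a..b} (\<lambda>\<alpha>. norm (g' \<alpha>)))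
           * \<bar>deriv (deriv (Phi m x0)) \<alpha>0\<bar> powr (-1/2)"
  unfolding deriv_Phi deriv_dPhi
  by (intro exI[of _ "3 * pi"] allI impI stationary_phase.integral_bound stationary_phase.intro assms)
     auto

end
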